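(* Let $\mathbf{X}=(X_1,\ldots,X_d)$ be a random vector (components not necessarily independent), $Y=\eta(\mathbf{X})\in\mathcal{Y}$, and $k_{\mathcal{Y}}$ a positive definite kernel on $\mathcal{Y}$ with $\mathbb{E}_{\xi\sim\mathrm{P}_{Y\mid\mathbf{X}_A=\mathbf{x}_A}}k_{\mathcal{Y}}(\xi,\xi)<\infty$ for all $A\subseteq\{1,\ldots,d\}$ and all $\mathbf{x}_A$, and assume $\mathrm{MMD}^2_{\mathrm{tot}}>0$. Define for $A\subseteq\{1,\ldots,d\}$ $$\mathrm{val}(A)=\frac{\mathbb{E}_{\mathbf{X}_A}\big(\mathrm{MMD}^2(\mathrm{P}_Y,\mathrm{P}_{Y\mid\mathbf{X}_A})\big)}{\mathrm{MMD}^2_{\mathrm{tot}}},\qquad \mathrm{val}'(A)=\frac{\mathbb{E}_{\mathbf{X}_{-A}}\big[\mathbb{E}_{\xi\sim\mathrm{P}_{Y\mid\mathbf{X}_{-A}}}k_{\mathcal{Y}}(\xi,\xi)-\mathbb{E}_{\xi,\xi'\sim\mathrm{P}_{Y\mid\mathbf{X}_{-A}}}k_{\mathcal{Y}}(\xi,\xi')\big]}{\mathrm{MMD}^2_{\mathrm{tot}}}.$$ Then for every $l=1,\ldots,d$, the Shapley value of $l$ computed with value function $\mathrm{val}'$ equals the Shapley value of $l$ computed with value function $\mathrm{val}$ (the MMD-Shapley effect $Sh^{\mathrm{MMD}}_l$).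
   Context: For a value function $v$ on subsets of $\{1,\ldots,d\}$, the Shapley value of $l$ is $\phi_l(v)=\frac1d\sum_{A\subseteq\{1,\ldots,d\}\setminus\{l\}}\binom{d-1}{|A|}^{-1}\big(v(A\cup\{l\})-v(A)\big)$. $\mathbf{X}_A$ is the subvector with indices in $A$, $\mathbf{X}_{-A}$ that with indices in $\{1,\ldots,d\}\setminus A$; $\mathrm{P}_{Y\mid\mathbf{X}_A}$ is the conditional law of $Y$ given $\mathbf{X}_A$ (equal to $\mathrm{P}_Y$ when $A=\emptyset$), and $\xi,\xi'$ are independent draws from it. $\mathrm{MMD}^2(\mathrm{P},\mathrm{Q})=\mathbb{E}k_{\mathcal{Y}}(\xi,\xi')-2\mathbb{E}k_{\mathcal{Y}}(\xi,\zeta)+\mathbb{E}k_{\mathcal{Y}}(\zeta,\zeta')$ with $\xi,\xi'\sim\mathrm{P}$, $\zeta,\zeta'\sim\mathrm{Q}$ independent, and $\mathrm{MMD}^2_{\mathrm{tot}}=\mathbb{E}k_{\mathcal{Y}}(Y,Y)-\mathbb{E}k_{\mathcal{Y}}(Y,Y')$ with $Y'$ an independent copy of $Y$. *)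

theory Defs
  imports "HOL-Probability.Probability"
begin

definition pd_kernel :: "('y \<Rightarrow> 'y \<Rightarrow> real) \<Rightarrow> bool" where
  "pd_kernel k \<longleftrightarrow> (\<forall>x y. k x y = k y x) \<and>
     (\<forall>(ys :: 'y list) (c :: real list). length c = length ys \<longrightarrow>
        (\<Sum>i<length ys. \<Sum>j<length ys. c ! i * c ! j * k (ys ! i) (ys ! j)) \<ge> 0)"

definition subvec :: "(nat \<Rightarrow> 'a \<Rightarrow> 'x) \<Rightarrow> nat set \<Rightarrow> 'a \<Rightarrow> (nat \<Rightarrow> 'x)" where
  "subvec X A \<omega> = restrict (\<lambda>i. X i \<omega>) A"

definition is_cond_law ::
  "'a measure \<Rightarrow> 'z measure \<Rightarrow> ('a \<Rightarrow> 'z) \<Rightarrow> 'y measure \<Rightarrow> ('a \<Rightarrow> 'y) \<Rightarrow> ('z \<Rightarrow> 'y measure) \<Rightarrow> bool"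
  where
  "is_cond_law M Nz Z L Y \<kappa> \<longleftrightarrow>
     \<kappa> \<in> measurable Nz (subprob_algebra L) \<and>
     (\<forall>z\<in>space Nz. prob_space (\<kappa> z)) \<and>
     (\<forall>S\<in>sets Nz. \<forall>T\<in>sets L.
        measure M {\<omega>\<in>space M. Z \<omega> \<in> S \<and> Y \<omega> \<in> T}
          = (\<integral>\<omega>. indicator S (Z \<omega>) * measure (\<kappa> (Z \<omega>)) T \<partial>M))"

definition kexp :: "('y \<Rightarrow> 'y \<Rightarrow> real) \<Rightarrow> 'y measure \<Rightarrow> 'y measure \<Rightarrow> real" where
  "kexp k P Q = (\<integral>p. k (fst p) (snd p) \<partial>(P \<Otimes>\<^sub>M Q))"

definition mmd2 :: "('y \<Rightarrow> 'y \<Rightarrow> real) \<Rightarrow> 'y measure \<Rightarrow> 'y measure \<Rightarrow> real" where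
  "mmd2 k P Q = kexp k P P - 2 * kexp k P Q + kexp k Q Q"

definition mmd2_tot :: "'a measure \<Rightarrow> 'y measure \<Rightarrow> ('a \<Rightarrow> 'y) \<Rightarrow> ('y \<Rightarrow> 'y \<Rightarrow> real) \<Rightarrow> real" where
  "mmd2_tot M L Y k = (\<integral>\<omega>. k (Y \<omega>) (Y \<omega>) \<partial>M) - kexp k (distr M L Y) (distr M L Y)"

definition shapley :: "nat \<Rightarrow> (nat set \<Rightarrow> real) \<Rightarrow> nat \<Rightarrow> real" where
  "shapley d v l = (1 / real d) *
     (\<Sum>A\<in>Pow ({1..d} - {l}). (v (insert l A) - v A) / real ((d - 1) choose card A))"

end

theory Submission
  imports Defs
begin

(* Let P be the law of Y and Q_A(w) the conditional law of Y given X_A(w). As P is the mixture of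
   the Q_A over the law of X_A, Fubini gives E[E_{Q_A} k(xi,xi)] = E_P k(y,y) and
   E[kexp(P, Q_A)] = kexp(P, P); integrability comes from the bound
   |k(x,y)| <= (k(x,x) + k(y,y)) / 2 of a positive definite kernel. Hence, with
   b(A) = E[kexp(Q_A, Q_A)], the numerator of val'(A) is E_P k(y,y) - b(-A) and that of val(A) is
   b(A) - kexp(P, P), so val'(A) = c - val(-A) for a constant c. The Shapley value is invariant
   under this duality: reindex its sum by complements in {1..d} - {l} and use the symmetry of the
   binomial coefficients. *)

lemma pd_kernel_diag_nonneg:
  assumes "pd_kernel k"
  shows "0 \<le> k x x"
  using assms[unfolded pd_kernel_def, THEN conjunct2, rule_format, of "[1]" "[x]"] by simp

lemma pd_kernel_abs_le:
  assumes "pd_kernel k"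
  shows "\<bar>k x y\<bar> \<le> (k x x + k y y) / 2"
proof -
  have sym: "k y x = k x y" using assms unfolding pd_kernel_def by blast
  note gram = assms[unfolded pd_kernel_def, THEN conjunct2, rule_format, of _ "[x, y]"]
  have "0 \<le> k x x + 2 * k x y + k y y"
    using gram[of "[1, 1]"] by (simp add: numeral_2_eq_2 lessThan_Suc sym)
  moreover have "0 \<le> k x x - 2 * k x y + k y y"
    using gram[of "[1, -1]"] by (simp add: numeral_2_eq_2 lessThan_Suc sym)
  ultimately show ?thesis by (simp add: abs_le_iff)
qed

lemma borel_measurable_kernel_diag:
  assumes "case_prod k \<in> borel_measurable (L \<Otimes>\<^sub>M L)"
  shows "(\<lambda>y. k y y) \<in> borel_measurable L"
  using measurable_compose[OF measurable_Pair[OF measurable_ident measurable_ident] assms] by simp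

lemma (in prob_space) distr_pair_snd:
  assumes "sigma_finite_measure N"
  shows "distr (M \<Otimes>\<^sub>M N) N snd = N"
proof (intro measure_eqI)
  interpret N: sigma_finite_measure N by fact
  fix A assume A: "A \<in> sets (distr (M \<Otimes>\<^sub>M N) N snd)"
  then have "emeasure (distr (M \<Otimes>\<^sub>M N) N snd) A = emeasure (M \<Otimes>\<^sub>M N) (space M \<times> A)"
    by (auto simp: emeasure_distr space_pair_measure dest: sets.sets_into_space
        intro!: arg_cong2[where f=emeasure])
  with A show "emeasure (distr (M \<Otimes>\<^sub>M N) N snd) A = emeasure N A"
    by (simp add: N.emeasure_pair_measure_Times emeasure_space_1)
qed simp

lemma
  fixes f :: "'b \<Rightarrow> real"
  assumes M: "space M \<noteq> {}" and Q: "Q \<in> M \<rightarrow>\<^sub>M subprob_algebra L"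
    and f: "f \<in> borel_measurable L" and nonneg: "\<And>y. y \<in> space L \<Longrightarrow> 0 \<le> f y"
    and int: "integrable (M \<bind> Q) f"
  shows integrable_integral_bind_nonneg: "integrable M (\<lambda>\<omega>. \<integral>y. f y \<partial>Q \<omega>)"
    and integral_bind_nonneg: "(\<integral>y. f y \<partial>(M \<bind> Q)) = (\<integral>\<omega>. (\<integral>y. f y \<partial>Q \<omega>) \<partial>M)"
proof -
  have sets_Q: "sets (Q \<omega>) = sets L" if "\<omega> \<in> space M" for \<omega>
    using measurable_space[OF Q that] by (simp add: space_subprob_algebra)
  have sets_bind: "sets (M \<bind> Q) = sets L" by (rule sets_bind[OF sets_Q M])
  have integral_eq_nn: "(\<integral>y. f y \<partial>N) = enn2real (\<integral>\<^sup>+y. ennreal (f y) \<partial>N)"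
    if "sets N = sets L" for N
    using that f nonneg sets_eq_imp_space_eq[OF that]
    by (intro integral_eq_nn_integral) (auto cong: measurable_cong_sets intro!: AE_I2)
  have nn_bind: "(\<integral>\<^sup>+y. ennreal (f y) \<partial>(M \<bind> Q)) = (\<integral>\<^sup>+\<omega>. \<integral>\<^sup>+y. ennreal (f y) \<partial>Q \<omega> \<partial>M)"
    by (rule nn_integral_bind[OF _ Q]) (use f in measurable)
  have "(\<integral>\<^sup>+y. ennreal (norm (f y)) \<partial>(M \<bind> Q)) = (\<integral>\<^sup>+y. ennreal (f y) \<partial>(M \<bind> Q))"
    using sets_eq_imp_space_eq[OF sets_bind] nonneg by (intro nn_integral_cong) simp
  with int have "(\<integral>\<^sup>+y. ennreal (f y) \<partial>(M \<bind> Q)) < \<infinity>"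
    by (simp add: integrable_iff_bounded)
  then have finite_nn: "(\<integral>\<^sup>+\<omega>. \<integral>\<^sup>+y. ennreal (f y) \<partial>Q \<omega> \<partial>M) < \<infinity>" using nn_bind by simp
  have inner_measurable: "(\<lambda>\<omega>. \<integral>\<^sup>+y. ennreal (f y) \<partial>Q \<omega>) \<in> borel_measurable M"
    by (rule measurable_compose[OF Q nn_integral_measurable_subprob_algebra]) (use f in measurable)
  have "AE \<omega> in M. (\<integral>\<^sup>+y. ennreal (f y) \<partial>Q \<omega>) \<noteq> \<infinity>"
    by (rule nn_integral_noteq_infinite[OF inner_measurable]) (use finite_nn in simp)
  then have nn_outer: "(\<integral>\<^sup>+\<omega>. ennreal (\<integral>y. f y \<partial>Q \<omega>) \<partial>M) = (\<integral>\<^sup>+\<omega>. \<integral>\<^sup>+y. ennreal (f y) \<partial>Q \<omega> \<partial>M)"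
    by (intro nn_integral_cong_AE) (auto simp: integral_eq_nn[OF sets_Q] ennreal_enn2real_if)
  have outer_measurable: "(\<lambda>\<omega>. \<integral>y. f y \<partial>Q \<omega>) \<in> borel_measurable M"
    by (rule measurable_compose[OF Q integral_measurable_subprob_algebra[OF f]])
  have outer_nonneg: "AE \<omega> in M. 0 \<le> (\<integral>y. f y \<partial>Q \<omega>)"
    by (rule AE_I2) (simp add: integral_eq_nn[OF sets_Q])
  show "integrable M (\<lambda>\<omega>. \<integral>y. f y \<partial>Q \<omega>)"
    using finite_nn nn_outer by (intro integrableI_nonneg[OF outer_measurable outer_nonneg]) simp
  show "(\<integral>y. f y \<partial>(M \<bind> Q)) = (\<integral>\<omega>. (\<integral>y. f y \<partial>Q \<omega>) \<partial>M)"
    unfolding integral_eq_nn[OF sets_bind] integral_eq_nn_integral[OF outer_measurable outer_nonneg]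
      nn_bind nn_outer ..
qed

lemma
  fixes f h :: "'b \<Rightarrow> real"
  assumes M: "space M \<noteq> {}" and Q: "Q \<in> M \<rightarrow>\<^sub>M subprob_algebra L"
    and f: "f \<in> borel_measurable L" and h: "h \<in> borel_measurable L"
    and dominated: "\<And>y. y \<in> space L \<Longrightarrow> \<bar>f y\<bar> \<le> h y"
    and h_Q: "\<And>\<omega>. \<omega> \<in> space M \<Longrightarrow> integrable (Q \<omega>) h"
    and h_bind: "integrable (M \<bind> Q) h"
  shows integrable_integral_bind: "integrable M (\<lambda>\<omega>. \<integral>y. f y \<partial>Q \<omega>)"
    and integral_bind_dominated: "(\<integral>y. f y \<partial>(M \<bind> Q)) = (\<integral>\<omega>. (\<integral>y. f y \<partial>Q \<omega>) \<partial>M)"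
proof -
  have integrable_dominated: "integrable N f" if N: "sets N = sets L" and "integrable N h" for N
  proof (rule Bochner_Integration.integrable_bound[OF \<open>integrable N h\<close>])
    show "f \<in> borel_measurable N" using f N by (simp cong: measurable_cong_sets)
    show "AE y in N. norm (f y) \<le> norm (h y)"
      using dominated sets_eq_imp_space_eq[OF N] by (auto intro!: AE_I2 order_trans[OF _ abs_ge_self])
  qed
  have sets_Q: "sets (Q \<omega>) = sets L" if "\<omega> \<in> space M" for \<omega>
    using measurable_space[OF Q that] by (simp add: space_subprob_algebra)
  have f_bind: "integrable (M \<bind> Q) f"
    by (rule integrable_dominated[OF sets_bind[OF sets_Q M] h_bind])
  have nonneg: "0 \<le> f y + h y" "0 \<le> h y" if "y \<in> space L" for y
    using dominated[OF that] by auto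
  have f_plus_h: "(\<lambda>y. f y + h y) \<in> borel_measurable L" "integrable (M \<bind> Q) (\<lambda>y. f y + h y)"
    using f h f_bind h_bind by auto
  note sum = integrable_integral_bind_nonneg[OF M Q f_plus_h(1) nonneg(1) f_plus_h(2)]
      integral_bind_nonneg[OF M Q f_plus_h(1) nonneg(1) f_plus_h(2)]
    and h_only = integrable_integral_bind_nonneg[OF M Q h nonneg(2) h_bind]
      integral_bind_nonneg[OF M Q h nonneg(2) h_bind]
  have inner_diff: "(\<integral>y. f y \<partial>Q \<omega>) = (\<integral>y. f y + h y \<partial>Q \<omega>) - (\<integral>y. h y \<partial>Q \<omega>)"
    if "\<omega> \<in> space M" for \<omega>
    using integrable_dominated[OF sets_Q h_Q] h_Q that by simp
  have "integrable M (\<lambda>\<omega>. (\<integral>y. f y + h y \<partial>Q \<omega>) - (\<integral>y. h y \<partial>Q \<omega>))"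
    using sum(1) h_only(1) by simp
  then show "integrable M (\<lambda>\<omega>. \<integral>y. f y \<partial>Q \<omega>)"
    using inner_diff by (simp cong: Bochner_Integration.integrable_cong)
  have "(\<integral>y. f y \<partial>(M \<bind> Q)) = (\<integral>y. f y + h y \<partial>(M \<bind> Q)) - (\<integral>y. h y \<partial>(M \<bind> Q))"
    using f_bind h_bind by simp
  also have "\<dots> = (\<integral>\<omega>. (\<integral>y. f y + h y \<partial>Q \<omega>) - (\<integral>y. h y \<partial>Q \<omega>) \<partial>M)"
    using sum h_only by simp
  also have "\<dots> = (\<integral>\<omega>. (\<integral>y. f y \<partial>Q \<omega>) \<partial>M)"
    using inner_diff by (simp cong: Bochner_Integration.integral_cong)
  finally show "(\<integral>y. f y \<partial>(M \<bind> Q)) = (\<integral>\<omega>. (\<integral>y. f y \<partial>Q \<omega>) \<partial>M)" .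
qed

lemma abs_integral_kernel_section_le:
  fixes k :: "'y \<Rightarrow> 'y \<Rightarrow> real"
  assumes pd: "pd_kernel k" and k: "case_prod k \<in> borel_measurable (L \<Otimes>\<^sub>M L)"
    and P: "prob_space P" and sets_P: "sets P = sets L" and diag_P: "integrable P (\<lambda>y. k y y)"
    and q: "q \<in> space L"
  shows "\<bar>\<integral>p. k p q \<partial>P\<bar> \<le> ((\<integral>p. k p p \<partial>P) + k q q) / 2"
proof -
  interpret P: prob_space P by fact
  have bound: "integrable P (\<lambda>p. (k p p + k q q) / 2)" using diag_P by simp
  have "(\<lambda>p. k p q) \<in> borel_measurable P"
    using measurable_compose[OF measurable_Pair[OF measurable_ident measurable_const[OF q]] k] sets_P
    by (simp cong: measurable_cong_sets)
  then have integrable_section: "integrable P (\<lambda>p. k p q)"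
  proof (rule Bochner_Integration.integrable_bound[OF bound])
    show "AE p in P. norm (k p q) \<le> norm ((k p p + k q q) / 2)"
      using pd_kernel_abs_le[OF pd] by (intro AE_I2) (metis abs_ge_self order_trans real_norm_def)
  qed
  have "\<bar>\<integral>p. k p q \<partial>P\<bar> \<le> (\<integral>p. \<bar>k p q\<bar> \<partial>P)"
    using integral_norm_bound[of P "\<lambda>p. k p q"] by simp
  also have "\<dots> \<le> (\<integral>p. (k p p + k q q) / 2 \<partial>P)"
    using integrable_section bound pd_kernel_abs_le[OF pd] by (intro integral_mono) auto
  also have "\<dots> = ((\<integral>p. k p p \<partial>P) + k q q) / 2"
    using diag_P by (simp add: P.prob_space)
  finally show ?thesis .
qed

lemma
  fixes k :: "'y \<Rightarrow> 'y \<Rightarrow> real"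
  assumes pd: "pd_kernel k" and k: "case_prod k \<in> borel_measurable (L \<Otimes>\<^sub>M L)"
    and P: "prob_space P" and sets_P: "sets P = sets L" and diag_P: "integrable P (\<lambda>y. k y y)"
    and Q: "prob_space Q" and sets_Q: "sets Q = sets L" and diag_Q: "integrable Q (\<lambda>y. k y y)"
  shows abs_kexp_le: "\<bar>kexp k P Q\<bar> \<le> ((\<integral>y. k y y \<partial>P) + (\<integral>y. k y y \<partial>Q)) / 2"
    and kexp_iterated: "kexp k P Q = (\<integral>q. (\<integral>p. k p q \<partial>P) \<partial>Q)"
proof -
  interpret P: prob_space P by fact
  interpret Q: prob_space Q by fact
  interpret pair_sigma_finite P Q ..
  have k_PQ: "(\<lambda>p. k (fst p) (snd p)) \<in> borel_measurable (P \<Otimes>\<^sub>M Q)"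
    using k sets_pair_measure_cong[OF sets_P sets_Q]
    by (simp add: case_prod_beta' cong: measurable_cong_sets)
  have diag: "(\<lambda>y. k y y) \<in> borel_measurable P" "(\<lambda>y. k y y) \<in> borel_measurable Q"
    using borel_measurable_kernel_diag[OF k] sets_P sets_Q by (simp_all cong: measurable_cong_sets)
  note fst = integrable_distr_eq[OF measurable_fst[of P Q] diag(1)]
      integral_distr[OF measurable_fst[of P Q] diag(1)]
  note snd = integrable_distr_eq[OF measurable_snd[of P Q] diag(2)]
      integral_distr[OF measurable_snd[of P Q] diag(2)]
  note marginals = Q.distr_pair_fst P.distr_pair_snd[OF Q.sigma_finite_measure]
  define h where "h = (\<lambda>p. (k (fst p) (fst p) + k (snd p) (snd p)) / 2)"
  have h: "integrable (P \<Otimes>\<^sub>M Q) h"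
    using fst(1) snd(1) diag_P diag_Q by (simp add: h_def marginals)
  have h_integral: "(\<integral>p. h p \<partial>(P \<Otimes>\<^sub>M Q)) = ((\<integral>y. k y y \<partial>P) + (\<integral>y. k y y \<partial>Q)) / 2"
    using fst snd diag_P diag_Q by (simp add: h_def marginals)
  have k_le_h: "\<bar>k (fst p) (snd p)\<bar> \<le> h p" for p unfolding h_def by (rule pd_kernel_abs_le[OF pd])
  have kexp_int: "integrable (P \<Otimes>\<^sub>M Q) (\<lambda>p. k (fst p) (snd p))"
    by (rule Bochner_Integration.integrable_bound[OF h k_PQ])
      (auto intro!: AE_I2 order_trans[OF k_le_h abs_ge_self])
  have "\<bar>kexp k P Q\<bar> \<le> (\<integral>p. \<bar>k (fst p) (snd p)\<bar> \<partial>(P \<Otimes>\<^sub>M Q))"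
    unfolding kexp_def using integral_norm_bound[of "P \<Otimes>\<^sub>M Q" "\<lambda>p. k (fst p) (snd p)"] by simp
  also have "\<dots> \<le> (\<integral>p. h p \<partial>(P \<Otimes>\<^sub>M Q))"
    using kexp_int h k_le_h by (intro integral_mono) auto
  finally show "\<bar>kexp k P Q\<bar> \<le> ((\<integral>y. k y y \<partial>P) + (\<integral>y. k y y \<partial>Q)) / 2"
    unfolding h_integral .
  show "kexp k P Q = (\<integral>q. (\<integral>p. k p q \<partial>P) \<partial>Q)"
    using integral_snd[of k] kexp_int unfolding kexp_def by (simp add: case_prod_beta')
qed

locale kernel_mixture = prob_space M
  for M :: "'a measure" and L :: "'y measure" and k :: "'y \<Rightarrow> 'y \<Rightarrow> real"
    and Q :: "'a \<Rightarrow> 'y measure" +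
  assumes measurable_Q: "Q \<in> M \<rightarrow>\<^sub>M subprob_algebra L"
    and prob_space_Q: "\<And>\<omega>. \<omega> \<in> space M \<Longrightarrow> prob_space (Q \<omega>)"
    and integrable_diag_Q: "\<And>\<omega>. \<omega> \<in> space M \<Longrightarrow> integrable (Q \<omega>) (\<lambda>y. k y y)"
    and integrable_diag_mixture: "integrable (M \<bind> Q) (\<lambda>y. k y y)"
    and pd: "pd_kernel k"
    and measurable_k: "case_prod k \<in> borel_measurable (L \<Otimes>\<^sub>M L)"
begin

lemma sets_Q: "\<omega> \<in> space M \<Longrightarrow> sets (Q \<omega>) = sets L"
  using measurable_space[OF measurable_Q] by (simp add: space_subprob_algebra)

lemma sets_mixture: "sets (M \<bind> Q) = sets L"
  by (rule sets_bind[OF sets_Q not_empty])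

lemma prob_space_mixture: "prob_space (M \<bind> Q)"
  by (rule prob_space_bind[OF AE_I2[OF prob_space_Q] measurable_Q])

lemma
  shows integrable_integral_diag: "integrable M (\<lambda>\<omega>. \<integral>y. k y y \<partial>Q \<omega>)"
    and integral_integral_diag: "(\<integral>\<omega>. (\<integral>y. k y y \<partial>Q \<omega>) \<partial>M) = (\<integral>y. k y y \<partial>(M \<bind> Q))"
  using integrable_integral_bind_nonneg[OF not_empty measurable_Q _ _ integrable_diag_mixture]
    integral_bind_nonneg[OF not_empty measurable_Q _ _ integrable_diag_mixture]
    borel_measurable_kernel_diag[OF measurable_k] pd_kernel_diag_nonneg[OF pd]
  by simp_all

lemma integrable_kexp_Q: "integrable M (\<lambda>\<omega>. kexp k (Q \<omega>) (Q \<omega>))"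
proof (rule Bochner_Integration.integrable_bound[OF integrable_integral_diag])
  have "(\<lambda>\<omega>. Q \<omega> \<Otimes>\<^sub>M Q \<omega>) \<in> M \<rightarrow>\<^sub>M subprob_algebra (L \<Otimes>\<^sub>M L)"
    by (rule measurable_pair_measure[OF measurable_Q measurable_Q])
  from measurable_compose[OF this integral_measurable_subprob_algebra[OF measurable_k]]
  show "(\<lambda>\<omega>. kexp k (Q \<omega>) (Q \<omega>)) \<in> borel_measurable M"
    by (simp add: kexp_def case_prod_beta')
  show "AE \<omega> in M. norm (kexp k (Q \<omega>) (Q \<omega>)) \<le> norm (\<integral>y. k y y \<partial>Q \<omega>)"
  proof (rule AE_I2)
    fix \<omega> assume \<omega>: "\<omega> \<in> space M"
    have "\<bar>kexp k (Q \<omega>) (Q \<omega>)\<bar> \<le> (\<integral>y. k y y \<partial>Q \<omega>)"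
      using abs_kexp_le[OF pd measurable_k prob_space_Q sets_Q integrable_diag_Q
          prob_space_Q sets_Q integrable_diag_Q, OF \<omega> \<omega> \<omega> \<omega> \<omega> \<omega>] by simp
    then show "norm (kexp k (Q \<omega>) (Q \<omega>)) \<le> norm (\<integral>y. k y y \<partial>Q \<omega>)" by simp
  qed
qed

lemma
  shows integrable_kexp_mixture_Q: "integrable M (\<lambda>\<omega>. kexp k (M \<bind> Q) (Q \<omega>))"
    and integral_kexp_mixture_Q: "(\<integral>\<omega>. kexp k (M \<bind> Q) (Q \<omega>) \<partial>M) = kexp k (M \<bind> Q) (M \<bind> Q)"
proof -
  let ?P = "M \<bind> Q"
  interpret P: prob_space ?P by (rule prob_space_mixture)
  define g where "g = (\<lambda>q. \<integral>p. k p q \<partial>?P)"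
  define h where "h = (\<lambda>q. ((\<integral>p. k p p \<partial>?P) + k q q) / 2)"
  have "(\<lambda>(q, p). k p q) \<in> borel_measurable (L \<Otimes>\<^sub>M ?P)"
    using measurable_compose[OF measurable_Pair[OF measurable_snd measurable_fst] measurable_k]
      sets_pair_measure_cong[OF refl sets_mixture, of L]
    by (simp add: case_prod_beta' cong: measurable_cong_sets)
  then have g: "g \<in> borel_measurable L"
    unfolding g_def using P.borel_measurable_lebesgue_integral[of "\<lambda>q p. k p q" L] by simp
  have h: "h \<in> borel_measurable L"
    unfolding h_def using borel_measurable_kernel_diag[OF measurable_k] by simp
  have g_le_h: "\<bar>g q\<bar> \<le> h q" if "q \<in> space L" for q
    unfolding g_def h_def
    by (rule abs_integral_kernel_section_le[OF pd measurable_k prob_space_mixture sets_mixture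
          integrable_diag_mixture that])
  have h_Q: "integrable (Q \<omega>) h" if "\<omega> \<in> space M" for \<omega>
  proof -
    interpret Q: prob_space "Q \<omega>" by (rule prob_space_Q[OF that])
    show ?thesis using integrable_diag_Q[OF that] by (simp add: h_def)
  qed
  have h_mixture: "integrable ?P h"
    using integrable_diag_mixture by (simp add: h_def)
  note dominated = integrable_integral_bind[OF not_empty measurable_Q g h g_le_h h_Q h_mixture]
    integral_bind_dominated[OF not_empty measurable_Q g h g_le_h h_Q h_mixture]
  have kexp_Q: "kexp k ?P (Q \<omega>) = (\<integral>q. g q \<partial>Q \<omega>)" if "\<omega> \<in> space M" for \<omega>
    unfolding g_def by (rule kexp_iterated[OF pd measurable_k prob_space_mixture sets_mixture
          integrable_diag_mixture prob_space_Q sets_Q integrable_diag_Q, OF that that that])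
  show "integrable M (\<lambda>\<omega>. kexp k ?P (Q \<omega>))"
    using dominated(1) kexp_Q by (simp cong: Bochner_Integration.integrable_cong)
  have "(\<integral>\<omega>. kexp k ?P (Q \<omega>) \<partial>M) = (\<integral>\<omega>. (\<integral>q. g q \<partial>Q \<omega>) \<partial>M)"
    using kexp_Q by (simp cong: Bochner_Integration.integral_cong)
  also have "\<dots> = (\<integral>q. g q \<partial>?P)"
    by (rule dominated(2)[symmetric])
  also have "\<dots> = kexp k ?P ?P"
    unfolding g_def by (rule kexp_iterated[OF pd measurable_k prob_space_mixture sets_mixture
          integrable_diag_mixture prob_space_mixture sets_mixture integrable_diag_mixture, symmetric])
  finally show "(\<integral>\<omega>. kexp k ?P (Q \<omega>) \<partial>M) = kexp k ?P ?P" .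
qed

lemma integral_kernel_variance:
  "(\<integral>\<omega>. (\<integral>y. k y y \<partial>Q \<omega>) - kexp k (Q \<omega>) (Q \<omega>) \<partial>M)
    = (\<integral>y. k y y \<partial>(M \<bind> Q)) - (\<integral>\<omega>. kexp k (Q \<omega>) (Q \<omega>) \<partial>M)"
  using integrable_integral_diag integrable_kexp_Q integral_integral_diag by simp

lemma integral_mmd2_mixture_Q:
  "(\<integral>\<omega>. mmd2 k (M \<bind> Q) (Q \<omega>) \<partial>M)
    = (\<integral>\<omega>. kexp k (Q \<omega>) (Q \<omega>) \<partial>M) - kexp k (M \<bind> Q) (M \<bind> Q)"
  using integrable_kexp_mixture_Q integral_kexp_mixture_Q integrable_kexp_Q
  by (simp add: mmd2_def prob_space)

end


lemma distr_eq_bind_cond_law: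
  assumes M: "prob_space M" and Y: "Y \<in> M \<rightarrow>\<^sub>M L" and Z: "Z \<in> M \<rightarrow>\<^sub>M Nz"
    and cond_law: "is_cond_law M Nz Z L Y \<kappa>"
  shows "distr M L Y = M \<bind> (\<lambda>\<omega>. \<kappa> (Z \<omega>))"
proof -
  interpret prob_space M by fact
  have Q: "(\<lambda>\<omega>. \<kappa> (Z \<omega>)) \<in> M \<rightarrow>\<^sub>M subprob_algebra L"
    using measurable_compose[OF Z] cond_law unfolding is_cond_law_def by blast
  have prob_Q: "prob_space (\<kappa> (Z \<omega>))" if "\<omega> \<in> space M" for \<omega>
    using cond_law measurable_space[OF Z that] unfolding is_cond_law_def by blast
  interpret D: prob_space "distr M L Y" by (rule prob_space_distr[OF Y])
  interpret B: prob_space "M \<bind> (\<lambda>\<omega>. \<kappa> (Z \<omega>))"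
    by (rule prob_space_bind[OF AE_I2[OF prob_Q] Q])
  show ?thesis
  proof (rule measure_eqI)
    show "sets (distr M L Y) = sets (M \<bind> (\<lambda>\<omega>. \<kappa> (Z \<omega>)))"
      by (simp add: sets_bind_measurable[OF Q not_empty])
    fix T assume "T \<in> sets (distr M L Y)"
    then have T: "T \<in> sets L" by simp
    have "measure (distr M L Y) T = measure M {\<omega>\<in>space M. Z \<omega> \<in> space Nz \<and> Y \<omega> \<in> T}"
      using measurable_space[OF Z]
      by (auto simp: measure_distr[OF Y T] intro!: arg_cong[where f="measure M"])
    also have "\<dots> = (\<integral>\<omega>. indicator (space Nz) (Z \<omega>) * measure (\<kappa> (Z \<omega>)) T \<partial>M)"
      using cond_law T unfolding is_cond_law_def by blast
    also have "\<dots> = (\<integral>\<omega>. measure (\<kappa> (Z \<omega>)) T \<partial>M)"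
      using measurable_space[OF Z] by (intro Bochner_Integration.integral_cong) auto
    also have "\<dots> = measure (M \<bind> (\<lambda>\<omega>. \<kappa> (Z \<omega>))) T"
      by (rule measure_bind[symmetric, OF Q T])
    finally show "emeasure (distr M L Y) T = emeasure (M \<bind> (\<lambda>\<omega>. \<kappa> (Z \<omega>))) T"
      by (simp add: D.emeasure_eq_measure B.emeasure_eq_measure)
  qed
qed

lemma distr_eq_cond_law_const:
  assumes M: "prob_space M" and Y: "Y \<in> M \<rightarrow>\<^sub>M L" and z: "z \<in> space Nz"
    and cond_law: "is_cond_law M Nz (\<lambda>_. z) L Y \<kappa>"
  shows "distr M L Y = \<kappa> z"
proof -
  have "subprob_space (\<kappa> z)"
    using cond_law z unfolding is_cond_law_def by (auto intro: prob_space_imp_subprob_space)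
  then show ?thesis
    using distr_eq_bind_cond_law[OF M Y measurable_const[OF z] cond_law] bind_const'[OF M] by simp
qed

lemma kernel_mixture_cond_law:
  assumes M: "prob_space M" and Y: "Y \<in> M \<rightarrow>\<^sub>M L" and Z: "Z \<in> M \<rightarrow>\<^sub>M Nz"
    and cond_law: "is_cond_law M Nz Z L Y \<kappa>"
    and diag_\<kappa>: "\<And>z. z \<in> space Nz \<Longrightarrow> integrable (\<kappa> z) (\<lambda>y. k y y)"
    and diag_Y: "integrable (distr M L Y) (\<lambda>y. k y y)"
    and pd: "pd_kernel k" and k: "case_prod k \<in> borel_measurable (L \<Otimes>\<^sub>M L)"
  shows "kernel_mixture M L k (\<lambda>\<omega>. \<kappa> (Z \<omega>))"
proof (intro kernel_mixture.intro kernel_mixture_axioms.intro)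
  show "(\<lambda>\<omega>. \<kappa> (Z \<omega>)) \<in> M \<rightarrow>\<^sub>M subprob_algebra L"
    using measurable_compose[OF Z] cond_law unfolding is_cond_law_def by blast
  show "prob_space (\<kappa> (Z \<omega>))" "integrable (\<kappa> (Z \<omega>)) (\<lambda>y. k y y)" if "\<omega> \<in> space M" for \<omega>
    using cond_law diag_\<kappa> measurable_space[OF Z that] unfolding is_cond_law_def by blast+
  show "integrable (M \<bind> (\<lambda>\<omega>. \<kappa> (Z \<omega>))) (\<lambda>y. k y y)"
    using diag_Y distr_eq_bind_cond_law[OF M Y Z cond_law] by simp
qed (use M pd k in simp_all)

lemma measurable_subvec:
  assumes "\<And>i. i \<in> A \<Longrightarrow> X i \<in> M \<rightarrow>\<^sub>M N i"
  shows "subvec X A \<in> M \<rightarrow>\<^sub>M (\<Pi>\<^sub>M i\<in>A. N i)"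
  unfolding subvec_def using assms by (rule measurable_restrict)

lemma shapley_dual:
  assumes l: "l \<in> {1..d}" and dual: "\<And>A. A \<subseteq> {1..d} \<Longrightarrow> w A = c - v ({1..d} - A)"
  shows "shapley d w l = shapley d v l"
proof -
  define S where "S = {1..d} - {l}"
  have "finite S" and card_S: "card S = d - 1" using l by (auto simp: S_def)
  have "bij_betw (\<lambda>A. S - A) (Pow S) (Pow S)"
    by (rule bij_betwI[where g="\<lambda>A. S - A"]) auto
  then have "(\<Sum>A\<in>Pow S. (w (insert l A) - w A) / real ((d - 1) choose card A))
      = (\<Sum>A\<in>Pow S. (w (insert l (S - A)) - w (S - A)) / real ((d - 1) choose card (S - A)))"
    by (rule sum.reindex_bij_betw[symmetric])
  also have "\<dots> = (\<Sum>A\<in>Pow S. (v (insert l A) - v A) / real ((d - 1) choose card A))"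
  proof (rule sum.cong[OF refl])
    fix A assume "A \<in> Pow S"
    then have A: "A \<subseteq> S" by simp
    have "card (S - A) = d - 1 - card A" and "card A \<le> d - 1"
      using card_Diff_subset[OF finite_subset[OF A \<open>finite S\<close>] A] card_mono[OF \<open>finite S\<close> A] card_S
      by simp_all
    then have "(d - 1) choose card (S - A) = (d - 1) choose card A"
      using binomial_symmetric by simp
    moreover have "{1..d} - insert l (S - A) = A" "{1..d} - (S - A) = insert l A"
      using A l by (auto simp: S_def)
    moreover have "insert l (S - A) \<subseteq> {1..d}" "S - A \<subseteq> {1..d}"
      using l by (auto simp: S_def)
    ultimately show "(w (insert l (S - A)) - w (S - A)) / real ((d - 1) choose card (S - A))
        = (v (insert l A) - v A) / real ((d - 1) choose card A)"
      by (simp add: dual)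
  qed
  finally show ?thesis unfolding shapley_def S_def by simp
qed

theorem mainTheorem9:
  fixes M :: "'a measure" and d :: nat
    and N :: "nat \<Rightarrow> 'x measure" and X :: "nat \<Rightarrow> 'a \<Rightarrow> 'x"
    and L :: "'y measure" and \<eta> :: "(nat \<Rightarrow> 'x) \<Rightarrow> 'y" and Y :: "'a \<Rightarrow> 'y"
    and k :: "'y \<Rightarrow> 'y \<Rightarrow> real"
    and \<kappa> :: "nat set \<Rightarrow> (nat \<Rightarrow> 'x) \<Rightarrow> 'y measure"
    and l :: nat
  assumes "prob_space M"
    and "\<And>i. i \<in> {1..d} \<Longrightarrow> X i \<in> measurable M (N i)"
    and "\<eta> \<in> measurable (\<Pi>\<^sub>M i\<in>{1..d}. N i) L"
    and "Y = (\<lambda>\<omega>. \<eta> (subvec X {1..d} \<omega>))"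
    and "pd_kernel k"
    and "case_prod k \<in> borel_measurable (L \<Otimes>\<^sub>M L)"
    and "\<And>A. A \<subseteq> {1..d} \<Longrightarrow>
           is_cond_law M (\<Pi>\<^sub>M i\<in>A. N i) (subvec X A) L Y (\<kappa> A)"
    and "\<And>A x. A \<subseteq> {1..d} \<Longrightarrow> x \<in> space (\<Pi>\<^sub>M i\<in>A. N i) \<Longrightarrow>
           integrable (\<kappa> A x) (\<lambda>y. k y y)"
    and "mmd2_tot M L Y k > 0"
    and "l \<in> {1..d}"
  shows "shapley d
           (\<lambda>A. (\<integral>\<omega>. (\<integral>\<xi>. k \<xi> \<xi> \<partial>(\<kappa> ({1..d} - A) (subvec X ({1..d} - A) \<omega>)))
                       - kexp k (\<kappa> ({1..d} - A) (subvec X ({1..d} - A) \<omega>))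
                                (\<kappa> ({1..d} - A) (subvec X ({1..d} - A) \<omega>)) \<partial>M)
                 / mmd2_tot M L Y k) l
       = shapley d
           (\<lambda>A. (\<integral>\<omega>. mmd2 k (distr M L Y) (\<kappa> A (subvec X A \<omega>)) \<partial>M)
                 / mmd2_tot M L Y k) l"
proof -
  interpret prob_space M by (rule assms(1))
  have subvec: "subvec X B \<in> M \<rightarrow>\<^sub>M (\<Pi>\<^sub>M i\<in>B. N i)" if "B \<subseteq> {1..d}" for B
    using assms(2) that by (intro measurable_subvec) auto
  have Y: "Y \<in> M \<rightarrow>\<^sub>M L"
    unfolding assms(4) by (rule measurable_compose[OF subvec assms(3)]) simp
  \<comment> \<open>The empty subvector is constant, so its conditional law is the law of Y.\<close>
  have "subvec X {} = (\<lambda>_ _. undefined)"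
    by (simp add: subvec_def fun_eq_iff)
  then have "is_cond_law M (\<Pi>\<^sub>M i\<in>{}. N i) (\<lambda>_ _. undefined) L Y (\<kappa> {})"
    using assms(7)[of "{}"] by simp
  then have "distr M L Y = \<kappa> {} (\<lambda>_. undefined)"
    by (rule distr_eq_cond_law_const[OF assms(1) Y, rotated]) (simp add: space_PiM_empty)
  then have diag_Y: "integrable (distr M L Y) (\<lambda>y. k y y)"
    using assms(8)[of "{}"] by (simp add: space_PiM_empty)
  define E where "E = (\<integral>y. k y y \<partial>distr M L Y)"
  define K where "K = kexp k (distr M L Y) (distr M L Y)"
  define b where "b B = (\<integral>\<omega>. kexp k (\<kappa> B (subvec X B \<omega>)) (\<kappa> B (subvec X B \<omega>)) \<partial>M)" for B
  have mixture: "kernel_mixture M L k (\<lambda>\<omega>. \<kappa> B (subvec X B \<omega>))"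
    and distr_eq: "distr M L Y = M \<bind> (\<lambda>\<omega>. \<kappa> B (subvec X B \<omega>))" if "B \<subseteq> {1..d}" for B
    using kernel_mixture_cond_law[OF assms(1) Y subvec[OF that] assms(7)[OF that]
        assms(8)[OF that] diag_Y assms(5,6)]
      distr_eq_bind_cond_law[OF assms(1) Y subvec[OF that] assms(7)[OF that]] by auto
  have variance: "(\<integral>\<omega>. (\<integral>\<xi>. k \<xi> \<xi> \<partial>(\<kappa> B (subvec X B \<omega>)))
        - kexp k (\<kappa> B (subvec X B \<omega>)) (\<kappa> B (subvec X B \<omega>)) \<partial>M) = E - b B"
    and mmd2: "(\<integral>\<omega>. mmd2 k (distr M L Y) (\<kappa> B (subvec X B \<omega>)) \<partial>M) = b B - K"
    if "B \<subseteq> {1..d}" for B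
    using kernel_mixture.integral_kernel_variance[OF mixture[OF that]]
      kernel_mixture.integral_mmd2_mixture_Q[OF mixture[OF that]]
    by (simp_all add: E_def K_def b_def distr_eq[OF that])
  show ?thesis
    by (rule shapley_dual[OF assms(10), where c = "(E - K) / mmd2_tot M L Y k"])
      (simp add: variance mmd2 Diff_Diff_Int Int_absorb1 diff_divide_distrib)
qed

end
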